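(* If $\mathbb{A}$ is a $C$-asymptotic set, then $\mathbb{A}$ is a $C$-pseudo-cone and $$\mathbb{A}=\bigcap_{v\in\Omega_{C^\circ}}H^-(v,h_{\mathbb{A}}(v)).$$
   Context: $C\subset\mathbb{R}^n$ ($n\ge2$) is a pointed closed convex cone with nonempty interior; $C^\circ=\{y:\langle x,y\rangle\le0\ \forall x\in C\}$; $\Omega_{C^\circ}=\mathbb{S}^{n-1}\cap\operatorname{int}C^\circ$. A $C$-asymptotic set is an unbounded closed convex set $\mathbb{A}\subset C$ with nonempty interior and $o\notin\mathbb{A}$ such that $\lim_{x\in\partial\mathbb{A},|x|\to\infty}d(x,\partial C)=0$. A $C$-pseudo-cone is a nonempty closed convex set $E$ with $o\notin E$, $\lambda x\in E$ for all $x\in E,\lambda\ge1$, and recession cone $\{x:E+x\subset E\}$ equal to $C$. $h_{\mathbb{A}}(v)=\sup_{x\in\mathbb{A}}\langle x,v\rangle$ and $H^-(v,\alpha)=\{x:\langle x,v\rangle\le\alpha\}$. *)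

theory Defs
  imports "HOL-Analysis.Analysis"
begin

definition pointed_cone :: "'a::euclidean_space set \<Rightarrow> bool" where
  "pointed_cone C \<longleftrightarrow> cone C \<and> C \<inter> uminus ` C \<subseteq> {0}"

definition proper_cone :: "'a::euclidean_space set \<Rightarrow> bool" where
  "proper_cone C \<longleftrightarrow> pointed_cone C \<and> closed C \<and> convex C \<and> interior C \<noteq> {}"

definition polar :: "'a::euclidean_space set \<Rightarrow> 'a set" where
  "polar C = {y. \<forall>x\<in>C. x \<bullet> y \<le> 0}"

definition Omega_polar :: "'a::euclidean_space set \<Rightarrow> 'a set" where
  "Omega_polar C = sphere 0 1 \<inter> interior (polar C)"

definition C_asymptotic :: "'a::euclidean_space set \<Rightarrow> 'a set \<Rightarrow> bool" where
  "C_asymptotic C A \<longleftrightarrow> \<not> bounded A \<and> closed A \<and> convex A \<and> A \<subseteq> C \<and>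
     interior A \<noteq> {} \<and> 0 \<notin> A \<and>
     (\<forall>e>0. \<exists>R. \<forall>x\<in>frontier A. norm x > R \<longrightarrow> infdist x (frontier C) < e)"

definition recession_cone :: "'a::euclidean_space set \<Rightarrow> 'a set" where
  "recession_cone E = {x. (\<lambda>y. y + x) ` E \<subseteq> E}"

definition C_pseudo_cone :: "'a::euclidean_space set \<Rightarrow> 'a set \<Rightarrow> bool" where
  "C_pseudo_cone C E \<longleftrightarrow> E \<noteq> {} \<and> closed E \<and> convex E \<and> 0 \<notin> E \<and>
     (\<forall>x\<in>E. \<forall>t::real. t \<ge> 1 \<longrightarrow> t *\<^sub>R x \<in> E) \<and> recession_cone E = C"

definition support_fun :: "'a::euclidean_space set \<Rightarrow> 'a \<Rightarrow> real" where
  "support_fun A v = (SUP x\<in>A. x \<bullet> v)"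

definition halfspace_le :: "'a::euclidean_space \<Rightarrow> real \<Rightarrow> 'a set" where
  "halfspace_le v \<alpha> = {x. x \<bullet> v \<le> \<alpha>}"

end

theory Submission
  imports Defs
begin

text \<open>
Far out on its boundary, a C-asymptotic set A approaches the boundary of C. Hence, if a ball of
radius \<delta> around a far point m lies in A, the ray from m in a direction u of the interior of C can
leave A only through a boundary point m + t u of bounded norm; but m + t u lies in C at depth
at least t r (where the ball of radius r about u lies in C), which bounds t and contradicts the
distance of m from the origin. So interior directions of C, and by closedness all of C, are
recession directions of A, and A is a C-pseudo-cone. For the half-space representation, a point
outside A is separated from A by a linear functional; being bounded above on A it lies in the
polar of C, and a small perturbation towards an interior point of the polar followed by
normalisation yields a separating direction in Omega_polar C.
\<close>

section \<open>Convex cones\<close>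

lemma convex_cone_ball_translate:
  fixes K :: "'a::real_normed_vector set"
  assumes "convex_cone K" "c \<in> K" "ball q \<delta> \<subseteq> K"
  shows "ball (c + q) \<delta> \<subseteq> K"
proof
  fix y
  assume "y \<in> ball (c + q) \<delta>"
  then have "y - c \<in> K"
    using assms(3) by (auto simp: dist_norm algebra_simps)
  then show "y \<in> K"
    using convex_cone_add[OF assms(1,2)] by force
qed

lemma convex_cone_ball_scale:
  fixes K :: "'a::real_normed_vector set"
  assumes "convex_cone K" "0 < t" "ball u r \<subseteq> K"
  shows "ball (t *\<^sub>R u) (t * r) \<subseteq> K"
proof -
  have "ball (t *\<^sub>R u) (t * r) = (*\<^sub>R) t ` ball u r"
    using ball_scale[of t u r] assms(2) by simp
  then show ?thesis
    using assms by (auto intro: convex_cone_scaleR)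
qed

lemma convex_cone_interior_add:
  fixes K :: "'a::real_normed_vector set"
  assumes "convex_cone K" "x \<in> K" "y \<in> interior K"
  shows "x + y \<in> interior K"
  using assms convex_cone_ball_translate[OF assms(1,2)] by (meson mem_interior)

lemma convex_cone_interior_scaleR:
  fixes K :: "'a::real_normed_vector set"
  assumes "convex_cone K" "0 < c" "x \<in> interior K"
  shows "c *\<^sub>R x \<in> interior K"
proof -
  obtain r where "r > 0" "ball x r \<subseteq> K"
    using assms(3) mem_interior by blast
  then show ?thesis
    using convex_cone_ball_scale[OF assms(1,2)] assms(2) by (meson mem_interior mult_pos_pos)
qed

lemma sum_in_convex_cone:
  assumes "convex_cone K" "\<And>x. x \<in> S \<Longrightarrow> f x \<in> K"
  shows "sum f S \<in> K"
  using assms(2)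
  by (induction S rule: infinite_finite_induct)
    (auto intro: convex_cone_add[OF assms(1)] convex_cone_contains_0[OF assms(1)])

lemma closed_convex_cone_asymptotic_direction:
  fixes K :: "'a::real_normed_vector set"
  assumes "closed K" "convex_cone K" "\<And>n::nat. p + real n *\<^sub>R u \<in> K"
  shows "u \<in> K"
proof -
  have mem: "inverse (real (Suc n)) *\<^sub>R p + u \<in> K" for n
  proof -
    have "inverse (real (Suc n)) *\<^sub>R (p + real (Suc n) *\<^sub>R u) \<in> K"
      by (rule convex_cone_scaleR[OF assms(2) _ assms(3)]) simp
    then show ?thesis
      by (simp only: scaleR_add_right scaleR_scaleR) simp
  qed
  have "(\<lambda>n. inverse (real (Suc n)) *\<^sub>R p + u) \<longlonglongrightarrow> 0 *\<^sub>R p + u"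
    by (intro tendsto_intros LIMSEQ_inverse_real_of_nat)
  then have "(\<lambda>n. inverse (real (Suc n)) *\<^sub>R p + u) \<longlonglongrightarrow> u"
    by simp
  then show ?thesis
    by (rule closed_sequentially[OF assms(1), rotated]) (use mem in blast)
qed

section \<open>Proper cones and their polars\<close>

lemma proper_cone_convex_cone: "proper_cone C \<Longrightarrow> convex_cone C"
  unfolding proper_cone_def pointed_cone_def convex_cone_def cone_def conic_def
  using interior_subset by blast

lemma proper_cone_add_eq_0:
  assumes "proper_cone C" "x \<in> C" "y \<in> C" "x + y = 0"
  shows "x = 0"
proof -
  have "x \<in> uminus ` C"
    using assms(3,4) by (metis add_eq_0_iff image_eqI minus_minus)
  then show ?thesis
    using assms(1,2) unfolding proper_cone_def pointed_cone_def by blast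
qed

lemma proper_cone_ball_radius_le:
  fixes C :: "'a::euclidean_space set"
  assumes "proper_cone C" "ball q \<rho> \<subseteq> C"
  shows "\<rho> \<le> norm q"
proof (rule ccontr)
  assume "\<not> \<rho> \<le> norm q"
  obtain e :: 'a where e: "e \<in> Basis"
    using nonempty_Basis by blast
  define x where "x = ((\<rho> - norm q) / 2) *\<^sub>R e"
  have nx: "norm x < \<rho> - norm q" "x \<noteq> 0"
    using \<open>\<not> \<rho> \<le> norm q\<close> e by (auto simp: x_def)
  have "x \<in> ball q \<rho>" "- x \<in> ball q \<rho>"
    using nx(1) norm_triangle_ineq4[of q x] norm_triangle_ineq[of q x]
    by (auto simp: dist_norm)
  then have "x \<in> C" "- x \<in> C"
    using assms(2) by auto
  then show False
    using proper_cone_add_eq_0[OF assms(1)] nx(2) by force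
qed

lemma proper_cone_ray_depth:
  fixes C :: "'a::euclidean_space set"
  assumes pc: "proper_cone C" and "m \<in> C" "ball u r \<subseteq> C" "0 \<le> t"
  shows "t * r \<le> norm (m + t *\<^sub>R u)"
proof (cases "t = 0")
  case False
  have K: "convex_cone C"
    using pc by (rule proper_cone_convex_cone)
  have "ball (t *\<^sub>R u) (t * r) \<subseteq> C"
    using False assms(3,4) by (intro convex_cone_ball_scale[OF K]) auto
  then have "ball (m + t *\<^sub>R u) (t * r) \<subseteq> C"
    using assms(2) by (rule convex_cone_ball_translate[OF K, rotated])
  then show ?thesis
    by (rule proper_cone_ball_radius_le[OF pc])
qed simp

lemma zero_in_frontier_proper_cone:
  fixes C :: "'a::euclidean_space set"
  assumes "proper_cone C"
  shows "0 \<in> frontier C"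
proof -
  have "0 \<notin> interior C"
    using proper_cone_ball_radius_le[OF assms] by (force simp: mem_interior)
  moreover have "closed C" "0 \<in> C"
    using assms convex_cone_contains_0[OF proper_cone_convex_cone[OF assms]]
    by (auto simp: proper_cone_def)
  ultimately show ?thesis
    by (simp add: frontier_def)
qed

lemma convex_cone_polar: "convex_cone (polar C)"
proof -
  have "polar C = (\<Inter>x\<in>C. {y. x \<bullet> y \<le> 0})"
    by (auto simp: polar_def)
  then show ?thesis
    by (auto intro: convex_cone_Inter convex_cone_halfspace_le)
qed

lemma zero_notin_convex_hull_proper_cone_sphere:
  fixes C :: "'a::euclidean_space set"
  assumes "proper_cone C"
  shows "0 \<notin> convex hull (C \<inter> sphere 0 1)"
proof
  assume "0 \<in> convex hull (C \<inter> sphere 0 1)"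
  then obtain S u where S: "finite S" "S \<subseteq> C \<inter> sphere 0 1" "\<forall>x\<in>S. 0 \<le> u x"
    "sum u S = 1" "(\<Sum>v\<in>S. u v *\<^sub>R v) = 0"
    unfolding convex_hull_explicit by blast
  have "\<exists>x\<in>S. u x \<noteq> 0"
    using S(4) by (metis sum.neutral zero_neq_one)
  then obtain x where x: "x \<in> S" "u x > 0"
    using S(3) by force
  have K: "convex_cone C"
    using assms by (rule proper_cone_convex_cone)
  have "u x *\<^sub>R x + (\<Sum>v\<in>S - {x}. u v *\<^sub>R v) = 0"
    using S(1,5) x(1) by (simp add: sum.remove)
  moreover have "u x *\<^sub>R x \<in> C" "(\<Sum>v\<in>S - {x}. u v *\<^sub>R v) \<in> C"
    using S(2,3) x by (auto intro!: sum_in_convex_cone[OF K] convex_cone_scaleR[OF K])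
  ultimately have "u x *\<^sub>R x = 0"
    using proper_cone_add_eq_0[OF assms] by blast
  then show False
    using x S(2) by auto
qed

lemma proper_cone_negative_functional:
  fixes C :: "'a::euclidean_space set"
  assumes "proper_cone C"
  obtains w b where "b > 0" "\<And>c. c \<in> C \<Longrightarrow> w \<bullet> c \<le> - b * norm c"
proof -
  define K where "K = convex hull (C \<inter> sphere 0 1)"
  have "closed C"
    using assms by (simp add: proper_cone_def)
  then have "compact K"
    unfolding K_def by (intro compact_convex_hull closed_Int_compact) simp_all
  then obtain a b where ab: "0 < b" "\<And>x. x \<in> K \<Longrightarrow> a \<bullet> x > b"
    using separating_hyperplane_closed_0[of K] compact_imp_closed
      zero_notin_convex_hull_proper_cone_sphere[OF assms]
    unfolding K_def by (metis convex_convex_hull)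
  have "(- a) \<bullet> c \<le> - b * norm c" if "c \<in> C" for c
  proof (cases "c = 0")
    case False
    have "(1 / norm c) *\<^sub>R c \<in> C"
      using that convex_cone_scaleR[OF proper_cone_convex_cone[OF assms]] by simp
    then have "(1 / norm c) *\<^sub>R c \<in> K"
      unfolding K_def using False by (intro hull_inc) simp
    then have "b < a \<bullet> ((1 / norm c) *\<^sub>R c)"
      by (rule ab(2))
    then have "b * norm c < a \<bullet> c"
      using False by (simp add: pos_less_divide_eq)
    then show ?thesis
      by simp
  qed simp
  then show ?thesis
    using that ab(1) by blast
qed

lemma interior_polar_nonempty:
  fixes C :: "'a::euclidean_space set"
  assumes "proper_cone C"
  shows "interior (polar C) \<noteq> {}"
proof -
  obtain w b where wb: "b > 0" "\<And>c. c \<in> C \<Longrightarrow> w \<bullet> c \<le> - b * norm c"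
    using proper_cone_negative_functional[OF assms] by blast
  have "c \<bullet> y \<le> 0" if "y \<in> ball w b" "c \<in> C" for y c
  proof -
    have "c \<bullet> (y - w) \<le> norm c * norm (y - w)"
      by (rule norm_cauchy_schwarz)
    also have "\<dots> \<le> norm c * b"
      using that(1) by (intro mult_left_mono) (auto simp: dist_norm norm_minus_commute)
    moreover have "c \<bullet> y = w \<bullet> c + c \<bullet> (y - w)"
      by (simp add: inner_diff_right inner_commute)
    ultimately show ?thesis
      using wb(2)[OF that(2)] mult.commute[of b "norm c"] by linarith
  qed
  then have "ball w b \<subseteq> polar C"
    by (auto simp: polar_def)
  then have "w \<in> interior (polar C)"
    using wb(1) by (meson centre_in_ball interior_maximal open_ball subsetD)
  then show ?thesis
    by blast
qed

section \<open>Rays in closed convex sets\<close>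

lemma convex_ball_subset_shrink:
  fixes A :: "'a::real_normed_vector set"
  assumes "convex A" "a \<in> A" "ball p \<epsilon> \<subseteq> A" "0 < \<mu>" "\<mu> \<le> 1"
  shows "ball ((1 - \<mu>) *\<^sub>R a + \<mu> *\<^sub>R p) (\<mu> * \<epsilon>) \<subseteq> A"
proof
  fix y
  assume y: "y \<in> ball ((1 - \<mu>) *\<^sub>R a + \<mu> *\<^sub>R p) (\<mu> * \<epsilon>)"
  define y' where "y' = (1 / \<mu>) *\<^sub>R (y - (1 - \<mu>) *\<^sub>R a)"
  have "p - y' = (1 / \<mu>) *\<^sub>R (((1 - \<mu>) *\<^sub>R a + \<mu> *\<^sub>R p) - y)"
    using assms(4) by (simp add: y'_def algebra_simps)
  then have "dist p y' < \<epsilon>"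
    using y assms(4) by (simp add: dist_norm divide_less_eq mult.commute)
  then have "y' \<in> A"
    using assms(3) by auto
  moreover have "y = (1 - \<mu>) *\<^sub>R a + \<mu> *\<^sub>R y'"
    using assms(4) by (simp add: y'_def)
  ultimately show "y \<in> A"
    using convexD[OF assms(1,2), of y' "1 - \<mu>" \<mu>] assms(4,5) by simp
qed

lemma closed_convex_translate_by_ray_direction:
  fixes A :: "'a::real_normed_vector set"
  assumes "closed A" "convex A" "\<And>s. 0 \<le> s \<Longrightarrow> m + s *\<^sub>R u \<in> A" "x \<in> A"
  shows "x + u \<in> A"
proof -
  define \<mu> where "\<mu> n = inverse (real (Suc n))" for n
  have mem: "x + u + \<mu> n *\<^sub>R (m - x) \<in> A" for n
  proof -
    have \<mu>: "0 < \<mu> n" "\<mu> n \<le> 1"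
      by (simp_all add: \<mu>_def inverse_le_1_iff)
    then have "(1 - \<mu> n) *\<^sub>R x + \<mu> n *\<^sub>R (m + (1 / \<mu> n) *\<^sub>R u) \<in> A"
      using assms(2-4) by (intro convexD) auto
    moreover have "(1 - \<mu> n) *\<^sub>R x + \<mu> n *\<^sub>R (m + (1 / \<mu> n) *\<^sub>R u) = x + u + \<mu> n *\<^sub>R (m - x)"
      using \<mu>(1) by (simp add: algebra_simps)
    ultimately show ?thesis
      by simp
  qed
  have "(\<lambda>n. x + u + \<mu> n *\<^sub>R (m - x)) \<longlonglongrightarrow> x + u + 0 *\<^sub>R (m - x)"
    unfolding \<mu>_def by (intro tendsto_intros LIMSEQ_inverse_real_of_nat)
  then have "(\<lambda>n. x + u + \<mu> n *\<^sub>R (m - x)) \<longlonglongrightarrow> x + u"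
    by simp
  then show ?thesis
    by (rule closed_sequentially[OF assms(1), rotated]) (use mem in blast)
qed

section \<open>Asymptotic sets are pseudo-cones\<close>

lemma ball_subset_imp_le_infdist_frontier:
  assumes "frontier S \<noteq> {}" "ball q \<delta> \<subseteq> S"
  shows "\<delta> \<le> infdist q (frontier S)"
proof -
  have "ball q \<delta> \<subseteq> interior S"
    using assms(2) by (simp add: interior_maximal)
  then have "\<delta> \<le> dist q a" if "a \<in> frontier S" for a
    using that by (force simp: frontier_def)
  then show ?thesis
    using assms(1) by (auto simp: infdist_notempty intro: cINF_greatest)
qed

lemma ray_mem_of_deep_far_point:
  fixes C A :: "'a::euclidean_space set"
  assumes pc: "proper_cone C" and "A \<subseteq> C"
    and far: "\<And>y. y \<in> frontier A \<Longrightarrow> R < norm y \<Longrightarrow> infdist y (frontier C) < \<delta>"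
    and "0 < \<delta>" "ball m \<delta> \<subseteq> A"
    and "0 < r" "ball u r \<subseteq> C"
    and m_far: "R + R * norm u / r < norm m"
    and "0 \<le> s"
  shows "m + s *\<^sub>R u \<in> A"
proof (rule ccontr)
  assume "m + s *\<^sub>R u \<notin> A"
  moreover have "m \<in> A"
    using assms(4,5) by auto
  ultimately have "closed_segment m (m + s *\<^sub>R u) \<inter> frontier A \<noteq> {}"
    by (intro connected_Int_frontier) auto
  then obtain t where t: "0 \<le> t" "m + t *\<^sub>R u \<in> frontier A"
    using \<open>0 \<le> s\<close> by (auto simp: in_segment algebra_simps) (metis mult_nonneg_nonneg)
  define q where "q = m + t *\<^sub>R u"
  have K: "convex_cone C"
    using pc by (rule proper_cone_convex_cone)
  have "u \<in> C"
    using assms(6,7) by auto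
  then have "t *\<^sub>R u \<in> C"
    using t(1) by (rule convex_cone_scaleR[OF K, rotated])
  then have "ball (t *\<^sub>R u + m) \<delta> \<subseteq> C"
    using assms(2,5) by (intro convex_cone_ball_translate[OF K]) auto
  then have "ball q \<delta> \<subseteq> C"
    by (simp add: q_def add.commute)
  then have "\<delta> \<le> infdist q (frontier C)"
    using zero_in_frontier_proper_cone[OF pc] by (blast intro: ball_subset_imp_le_infdist_frontier)
  then have q_le: "norm q \<le> R"
    using far t(2) unfolding q_def by force
  have "t * r \<le> norm q"
    unfolding q_def using \<open>m \<in> A\<close> assms(2,7) t(1) by (intro proper_cone_ray_depth[OF pc]) auto
  then have "t \<le> R / r"
    using q_le \<open>0 < r\<close> by (simp add: pos_le_divide_eq)
  then have "t * norm u \<le> R * norm u / r"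
    using mult_right_mono[of t "R / r" "norm u"] by simp
  moreover have "norm m \<le> norm q + t * norm u"
    using norm_triangle_ineq4[of q "t *\<^sub>R u"] t(1) by (simp add: q_def)
  ultimately show False
    using q_le m_far by linarith
qed

lemma C_asymptotic_translate_interior:
  fixes C A :: "'a::euclidean_space set"
  assumes pc: "proper_cone C" and "C_asymptotic C A" "u \<in> interior C" "x \<in> A"
  shows "x + u \<in> A"
proof -
  have A: "\<not> bounded A" "closed A" "convex A" "A \<subseteq> C" "interior A \<noteq> {}"
    and asym: "\<forall>e>0. \<exists>R. \<forall>y\<in>frontier A. R < norm y \<longrightarrow> infdist y (frontier C) < e"
    using assms(2) by (auto simp: C_asymptotic_def)
  obtain r where r: "0 < r" "ball u r \<subseteq> C"
    using assms(3) mem_interior by blast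
  obtain p \<epsilon> where p: "0 < \<epsilon>" "ball p \<epsilon> \<subseteq> A"
    using A(5) mem_interior by blast
  obtain R0 where R0: "\<forall>y\<in>frontier A. R0 < norm y \<longrightarrow> infdist y (frontier C) < \<epsilon> / 2"
    using asym half_gt_zero[OF p(1)] by blast
  define R where "R = max R0 0"
  have R: "0 \<le> R" "\<And>y. y \<in> frontier A \<Longrightarrow> R < norm y \<Longrightarrow> infdist y (frontier C) < \<epsilon> / 2"
    using R0 by (auto simp: R_def)
  define B where "B = R + R * norm u / r"
  obtain a where a: "a \<in> A" "2 * B + norm p < norm a"
    using A(1) unfolding bounded_iff by (meson not_le)
  define m where "m = (1 - 1 / 2) *\<^sub>R a + (1 / 2) *\<^sub>R p"
  have m_ball: "ball m (\<epsilon> / 2) \<subseteq> A"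
    using convex_ball_subset_shrink[OF A(3) a(1) p(2), of "1 / 2"] by (simp add: m_def)
  have "a = 2 *\<^sub>R m - p"
    by (simp add: m_def algebra_simps)
  then have "norm a \<le> 2 * norm m + norm p"
    using norm_triangle_ineq4[of "2 *\<^sub>R m" p] by simp
  then have "B < norm m"
    using a(2) by linarith
  then have "m + s *\<^sub>R u \<in> A" if "0 \<le> s" for s
    using ray_mem_of_deep_far_point[OF pc A(4) R(2) _ m_ball r _ that] p(1)
    unfolding B_def by simp
  then show ?thesis
    using closed_convex_translate_by_ray_direction[OF A(2,3) _ assms(4)] by blast
qed

lemma C_asymptotic_recession_cone:
  fixes C A :: "'a::euclidean_space set"
  assumes pc: "proper_cone C" and as: "C_asymptotic C A"
  shows "recession_cone A = C"
proof -
  have A: "closed A" "convex A" "A \<subseteq> C" "interior A \<noteq> {}"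
    using as by (simp_all add: C_asymptotic_def)
  have K: "convex_cone C" "closed C"
    using pc by (auto simp: proper_cone_convex_cone proper_cone_def)
  obtain u0 where u0: "u0 \<in> interior C"
    using pc by (auto simp: proper_cone_def)
  have "x + c \<in> A" if "x \<in> A" "c \<in> C" for x c
  proof -
    \<comment> \<open>every point of the ray from x + u0 in direction c is x plus an interior point of C\<close>
    have "(x + u0) + s *\<^sub>R c \<in> A" if "0 \<le> s" for s
    proof -
      have "s *\<^sub>R c + u0 \<in> interior C"
        using convex_cone_interior_add[OF K(1) convex_cone_scaleR[OF K(1) that \<open>c \<in> C\<close>] u0] .
      then have "x + (s *\<^sub>R c + u0) \<in> A"
        using C_asymptotic_translate_interior[OF pc as _ \<open>x \<in> A\<close>] by blast
      then show ?thesis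
        by (simp add: algebra_simps)
    qed
    then show ?thesis
      using closed_convex_translate_by_ray_direction[OF A(1,2)] that(1) by blast
  qed
  moreover have "u \<in> C" if u: "\<forall>x\<in>A. x + u \<in> A" for u
  proof -
    obtain p where p: "p \<in> A"
      using A(4) interior_subset by blast
    have "p + real n *\<^sub>R u \<in> A" for n
    proof (induction n)
      case (Suc n)
      then have "(p + real n *\<^sub>R u) + u \<in> A"
        using u by blast
      then show ?case
        by (simp add: algebra_simps)
    qed (simp add: p)
    then show ?thesis
      using closed_convex_cone_asymptotic_direction[OF K(2,1)] A(3) by blast
  qed
  ultimately show ?thesis
    by (auto simp: recession_cone_def image_subset_iff)
qed

lemma C_asymptotic_imp_C_pseudo_cone:
  fixes C A :: "'a::euclidean_space set"
  assumes pc: "proper_cone C" and as: "C_asymptotic C A"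
  shows "C_pseudo_cone C A"
proof -
  have rec: "recession_cone A = C"
    by (rule C_asymptotic_recession_cone[OF pc as])
  have "t *\<^sub>R x \<in> A" if "x \<in> A" "1 \<le> t" for x and t :: real
  proof -
    have "(t - 1) *\<^sub>R x \<in> C"
      using that as convex_cone_scaleR[OF proper_cone_convex_cone[OF pc]]
      by (auto simp: C_asymptotic_def)
    then have "x + (t - 1) *\<^sub>R x \<in> A"
      using rec that(1) by (auto simp: recession_cone_def)
    then show ?thesis
      by (simp add: algebra_simps)
  qed
  moreover have "A \<noteq> {}" "closed A" "convex A" "0 \<notin> A"
    using as interior_subset by (auto simp: C_asymptotic_def)
  ultimately show ?thesis
    using rec by (simp add: C_pseudo_cone_def)
qed

section \<open>Pseudo-cones as intersections of half-spaces\<close>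

lemma C_pseudo_cone_subset:
  fixes C A :: "'a::euclidean_space set"
  assumes "C_pseudo_cone C A"
  shows "A \<subseteq> C"
proof
  fix x
  assume "x \<in> A"
  have A: "closed A" "convex A" "recession_cone A = C"
    and scale: "\<And>t. 1 \<le> t \<Longrightarrow> t *\<^sub>R x \<in> A"
    using assms \<open>x \<in> A\<close> by (simp_all add: C_pseudo_cone_def)
  have "x + s *\<^sub>R x \<in> A" if "0 \<le> s" for s
    using scale[of "1 + s"] that by (simp add: algebra_simps)
  then have "y + x \<in> A" if "y \<in> A" for y
    using closed_convex_translate_by_ray_direction[OF A(1,2) _ that] by blast
  then show "x \<in> C"
    using A(3) by (auto simp: recession_cone_def)
qed

lemma polar_of_bounded_functional:
  assumes "cone C" "x0 \<in> A" "\<And>x c. x \<in> A \<Longrightarrow> c \<in> C \<Longrightarrow> x + c \<in> A"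
    and "\<And>x. x \<in> A \<Longrightarrow> x \<bullet> v \<le> \<beta>"
  shows "v \<in> polar C"
  unfolding polar_def
proof (intro CollectI ballI leI notI)
  fix c
  assume "c \<in> C" "0 < c \<bullet> v"
  define t where "t = (\<beta> - x0 \<bullet> v) / (c \<bullet> v) + 1"
  have "0 \<le> t"
    using assms(4)[OF assms(2)] \<open>0 < c \<bullet> v\<close> by (simp add: t_def)
  then have "x0 + t *\<^sub>R c \<in> A"
    using assms(1-3) \<open>c \<in> C\<close> by (simp add: cone_def)
  moreover have "(x0 + t *\<^sub>R c) \<bullet> v = \<beta> + c \<bullet> v"
    using \<open>0 < c \<bullet> v\<close> by (simp add: t_def inner_add_left field_simps)
  ultimately show False
    using assms(4) \<open>0 < c \<bullet> v\<close> by fastforce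
qed

lemma separating_functional_into_interior_polar:
  fixes C A :: "'a::euclidean_space set"
  assumes "v0 \<in> polar C" "w \<in> interior (polar C)" "A \<subseteq> C"
    and "\<And>x. x \<in> A \<Longrightarrow> x \<bullet> v0 < \<beta>" "\<beta> < z \<bullet> v0"
  obtains v where "v \<in> interior (polar C)" "\<And>x. x \<in> A \<Longrightarrow> x \<bullet> v < \<beta>" "\<beta> < z \<bullet> v"
proof
  define \<kappa> where "\<kappa> = (z \<bullet> v0 - \<beta>) / (\<bar>z \<bullet> w\<bar> + 1)"
  have \<kappa>: "0 < \<kappa>" "\<kappa> * \<bar>z \<bullet> w\<bar> < z \<bullet> v0 - \<beta>"
    using assms(5) by (simp_all add: \<kappa>_def field_simps)
  show "v0 + \<kappa> *\<^sub>R w \<in> interior (polar C)"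
    using convex_cone_interior_add[OF convex_cone_polar assms(1)]
      convex_cone_interior_scaleR[OF convex_cone_polar \<kappa>(1) assms(2)] by blast
  have "w \<in> polar C"
    using assms(2) interior_subset by blast
  then show "x \<bullet> (v0 + \<kappa> *\<^sub>R w) < \<beta>" if "x \<in> A" for x
  proof -
    have "x \<bullet> w \<le> 0"
      using \<open>w \<in> polar C\<close> assms(3) that by (auto simp: polar_def)
    then have "\<kappa> * (x \<bullet> w) \<le> 0"
      using \<kappa>(1) by (simp add: mult_nonneg_nonpos)
    then show ?thesis
      using assms(4)[OF that] by (simp add: inner_add_right)
  qed
  have "- \<bar>z \<bullet> w\<bar> \<le> z \<bullet> w"
    by simp
  from mult_left_mono[OF this less_imp_le[OF \<kappa>(1)]]
  show "\<beta> < z \<bullet> (v0 + \<kappa> *\<^sub>R w)"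
    using \<kappa>(2) by (simp add: inner_add_right)
qed

lemma Omega_polar_separation:
  fixes C A :: "'a::euclidean_space set"
  assumes v: "v \<in> interior (polar C)" "A \<noteq> {}" "\<And>x. x \<in> A \<Longrightarrow> x \<bullet> v < \<beta>" "\<beta> < z \<bullet> v"
  obtains u where "u \<in> Omega_polar C" "support_fun A u < z \<bullet> u"
proof -
  obtain x0 where x0: "x0 \<in> A"
    using v(2) by blast
  have "0 < norm v"
    using v(3)[OF x0] v(4) by auto
  define u where "u = (1 / norm v) *\<^sub>R v"
  have "u \<in> interior (polar C)"
    unfolding u_def using \<open>0 < norm v\<close> v(1)
    by (intro convex_cone_interior_scaleR[OF convex_cone_polar]) simp_all
  moreover have "norm u = 1"
    using \<open>0 < norm v\<close> by (simp add: u_def)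
  moreover have "support_fun A u \<le> \<beta> / norm v"
    unfolding support_fun_def
  proof (rule cSUP_least[OF v(2)])
    fix x
    assume "x \<in> A"
    have "(x \<bullet> v) / norm v \<le> \<beta> / norm v"
      using v(3)[OF \<open>x \<in> A\<close>] \<open>0 < norm v\<close> by (intro divide_right_mono) simp_all
    then show "x \<bullet> u \<le> \<beta> / norm v"
      by (simp add: u_def)
  qed
  moreover have "\<beta> / norm v < z \<bullet> u"
  proof -
    have "\<beta> / norm v < (z \<bullet> v) / norm v"
      using v(4) \<open>0 < norm v\<close> by (rule divide_strict_right_mono)
    then show ?thesis
      by (simp add: u_def)
  qed
  ultimately show ?thesis
    using that by (auto simp: Omega_polar_def)
qed

lemma C_pseudo_cone_separation:
  fixes C A :: "'a::euclidean_space set"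
  assumes pc: "proper_cone C" and pseudo: "C_pseudo_cone C A" and "z \<notin> A"
  obtains u where "u \<in> Omega_polar C" "support_fun A u < z \<bullet> u"
proof -
  have A: "closed A" "convex A" "A \<noteq> {}" "recession_cone A = C"
    using pseudo by (simp_all add: C_pseudo_cone_def)
  have rec: "x + c \<in> A" if "x \<in> A" "c \<in> C" for x c
    using A(4) that unfolding recession_cone_def by blast
  obtain v0 \<beta> where sep: "\<And>x. x \<in> A \<Longrightarrow> x \<bullet> v0 < \<beta>" "\<beta> < z \<bullet> v0"
  proof -
    obtain a b where "a \<bullet> z < b" "\<forall>x\<in>A. b < a \<bullet> x"
      using separating_hyperplane_closed_point[OF A(2,1) \<open>z \<notin> A\<close>] by blast
    then show thesis
      by (intro that[of "- a" "- b"]) (auto simp: inner_commute)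
  qed
  obtain x0 where x0: "x0 \<in> A"
    using A(3) by blast
  have "cone C"
    using pc by (simp add: proper_cone_def pointed_cone_def)
  then have "v0 \<in> polar C"
    using polar_of_bounded_functional[OF _ x0 rec] sep(1) less_imp_le by blast
  moreover obtain w where "w \<in> interior (polar C)"
    using interior_polar_nonempty[OF pc] by blast
  ultimately obtain v where "v \<in> interior (polar C)" "\<And>x. x \<in> A \<Longrightarrow> x \<bullet> v < \<beta>"
    "\<beta> < z \<bullet> v"
    using separating_functional_into_interior_polar[OF _ _ C_pseudo_cone_subset[OF pseudo] sep]
    by blast
  then show ?thesis
    using Omega_polar_separation[OF _ A(3)] that by blast
qed

lemma C_pseudo_cone_eq_Inter_halfspaces:
  fixes C A :: "'a::euclidean_space set"
  assumes pc: "proper_cone C" and pseudo: "C_pseudo_cone C A"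
  shows "A = (\<Inter>v\<in>Omega_polar C. halfspace_le v (support_fun A v))"
proof (intro equalityI subsetI INT_I)
  fix x v
  assume "x \<in> A" "v \<in> Omega_polar C"
  then have "v \<in> polar C"
    using interior_subset by (auto simp: Omega_polar_def)
  then have "y \<bullet> v \<le> 0" if "y \<in> A" for y
    using C_pseudo_cone_subset[OF pseudo] that by (auto simp: polar_def)
  then have "bdd_above ((\<lambda>y. y \<bullet> v) ` A)"
    by (rule bdd_aboveI2)
  from cSUP_upper[OF \<open>x \<in> A\<close> this]
  show "x \<in> halfspace_le v (support_fun A v)"
    by (simp add: halfspace_le_def support_fun_def)
next
  fix z
  assume z: "z \<in> (\<Inter>v\<in>Omega_polar C. halfspace_le v (support_fun A v))"
  show "z \<in> A"
  proof (rule ccontr)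
    assume "z \<notin> A"
    then obtain u where "u \<in> Omega_polar C" "support_fun A u < z \<bullet> u"
      by (rule C_pseudo_cone_separation[OF pc pseudo])
    with z show False
      by (auto simp: halfspace_le_def)
  qed
qed

theorem lemma3p1:
  fixes C A :: "'a::euclidean_space set"
  assumes "DIM('a) \<ge> 2"
    and "proper_cone C"
    and "C_asymptotic C A"
  shows "C_pseudo_cone C A \<and>
         A = (\<Inter>v\<in>Omega_polar C. halfspace_le v (support_fun A v))"
  using C_asymptotic_imp_C_pseudo_cone[OF assms(2,3)]
    C_pseudo_cone_eq_Inter_halfspaces[OF assms(2)] by blast

end
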